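(* Let $\pi,\pi'\in\Pi$, $V\in\mathcal F$, and integers $d\ge1$, $h\ge0$; set $J=T_\pi^hV$ and $B'_\gamma=\gamma A'_1+\gamma^{d+h}A'_{d+h}$. Under the concentrability assumption below, \[ \|T^dV^{\pi}-T_{\pi'}V^{\pi}\|_{1,\rho_1}\;\le\;B'_\gamma\,\|V-V^{\pi}\|_{1,\rho_0}+\|T^dJ-T_{\pi'}V\|_{1,\rho_1}. \]
   Context: Consider a discounted infinite-horizon Markov decision process with (measurable) state space $\mathcal S$, finite action set $\mathcal A$, reward function $r:\mathcal S\times\mathcal A\to[0,R_{\max}]$, transition kernel $p(\cdot\mid s,a)$, and discount factor $\gamma\in[0,1)$. Let $V_{\max}=R_{\max}/(1-\gamma)$ and let $\mathcal F$ be the set of bounded measurable functions $\mathcal S\to[0,V_{\max}]$. Let $\Pi$ be the set of stationary deterministic (measurable) policies $\pi:\mathcal S\to\mathcal A$; $V^\pi(s)=\mathbf E[\sum_{t\ge0}\gamma^t r(s_t,\pi(s_t))]$ with $s_0=s$, $s_{t+1}\sim p(\cdot\mid s_t,\pi(s_t))$. For $V\in\mathcal F$: $(T_\pi V)(s)=r(s,\pi(s))+\gamma\int V(\tilde s)\,p(d\tilde s\mid s,\pi(s))$; $(TV)(s)=\max_{a\in\mathcal A}[r(s,a)+\gamma\int V(\tilde s)\,p(d\tilde s\mid s,a)]$; $T^d$, $T_\pi^h$ denote iterated compositions ($T_\pi^0$ is the identity). For a measure $\nu$ on $\mathcal S$, $(\nu P_\pi)(d\tilde s)=\int p(d\tilde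 s\mid s,\pi(s))\,\nu(ds)$. For a measure $\mu$ and measurable $f$, $\|f\|_{1,\mu}=\int|f|\,d\mu$. Let $\rho_0,\rho_1$ be probability distributions on $\mathcal S$. Concentrability assumption: for every $m\ge1$ and every $\mu_1,\ldots,\mu_m\in\Pi$, the measure $\rho_1P_{\mu_1}\cdots P_{\mu_m}$ is absolutely continuous with respect to $\rho_0$, and $A'_m=\sup_{\mu_1,\ldots,\mu_m\in\Pi}\bigl\|\frac{d\,\rho_1P_{\mu_1}\cdots P_{\mu_m}}{d\rho_0}\bigr\|_\infty<\infty$. *)

theory Defs
  imports "HOL-Probability.Probability"
begin

definition Tpol :: "('s \<Rightarrow> 'a \<Rightarrow> 's measure) \<Rightarrow> ('s \<Rightarrow> 'a \<Rightarrow> real) \<Rightarrow> real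
    \<Rightarrow> ('s \<Rightarrow> 'a) \<Rightarrow> ('s \<Rightarrow> real) \<Rightarrow> ('s \<Rightarrow> real)" where
  "Tpol p r \<gamma> \<pi> V = (\<lambda>s. r s (\<pi> s) + \<gamma> * (\<integral>t. V t \<partial>(p s (\<pi> s))))"

definition Topt :: "'a set \<Rightarrow> ('s \<Rightarrow> 'a \<Rightarrow> 's measure) \<Rightarrow> ('s \<Rightarrow> 'a \<Rightarrow> real) \<Rightarrow> real
    \<Rightarrow> ('s \<Rightarrow> real) \<Rightarrow> ('s \<Rightarrow> real)" where
  "Topt A p r \<gamma> V = (\<lambda>s. Max ((\<lambda>a. r s a + \<gamma> * (\<integral>t. V t \<partial>(p s a))) ` A))"

definition push :: "('s \<Rightarrow> 'a \<Rightarrow> 's measure) \<Rightarrow> 's measure \<Rightarrow> ('s \<Rightarrow> 'a) \<Rightarrow> 's measure" where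
  "push p \<nu> \<pi> = \<nu> \<bind> (\<lambda>s. p s (\<pi> s))"

definition state_dist :: "'s measure \<Rightarrow> ('s \<Rightarrow> 'a \<Rightarrow> 's measure) \<Rightarrow> ('s \<Rightarrow> 'a) \<Rightarrow> 's \<Rightarrow> nat \<Rightarrow> 's measure" where
  "state_dist M p \<pi> s t = ((\<lambda>\<nu>. push p \<nu> \<pi>) ^^ t) (return M s)"

(* V^pi(s) = E[sum_t gamma^t r(s_t, pi s_t)] = sum_t gamma^t E[r(s_t, pi s_t)] *)
definition Vpol :: "'s measure \<Rightarrow> ('s \<Rightarrow> 'a \<Rightarrow> 's measure) \<Rightarrow> ('s \<Rightarrow> 'a \<Rightarrow> real) \<Rightarrow> real
    \<Rightarrow> ('s \<Rightarrow> 'a) \<Rightarrow> 's \<Rightarrow> real" where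
  "Vpol M p r \<gamma> \<pi> s = (\<Sum>t. \<gamma> ^ t * (\<integral>x. r x (\<pi> x) \<partial>(state_dist M p \<pi> s t)))"

definition policies :: "'s measure \<Rightarrow> 'a set \<Rightarrow> ('s \<Rightarrow> 'a) set" where
  "policies M A = M \<rightarrow>\<^sub>M count_space A"

definition push_list :: "('s \<Rightarrow> 'a \<Rightarrow> 's measure) \<Rightarrow> 's measure \<Rightarrow> ('s \<Rightarrow> 'a) list \<Rightarrow> 's measure" where
  "push_list p \<rho> \<mu>s = foldl (push p) \<rho> \<mu>s"

definition conc_coeff :: "'s measure \<Rightarrow> 'a set \<Rightarrow> ('s \<Rightarrow> 'a \<Rightarrow> 's measure)
    \<Rightarrow> 's measure \<Rightarrow> 's measure \<Rightarrow> nat \<Rightarrow> ennreal" where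
  "conc_coeff M A p \<rho>0 \<rho>1 m =
     (SUP \<mu>s \<in> {\<mu>s. length \<mu>s = m \<and> set \<mu>s \<subseteq> policies M A}.
        esssup \<rho>0 (RN_deriv \<rho>0 (push_list p \<rho>1 \<mu>s)))"

definition norm1 :: "'s measure \<Rightarrow> ('s \<Rightarrow> real) \<Rightarrow> real" where
  "norm1 \<mu> f = (\<integral>x. \<bar>f x\<bar> \<partial>\<mu>)"

end

theory Submission imports Defs begin

text \<open>Each Bellman operator is dominated pointwise by a transition operator: for a measurable
greedy selector \<open>\<mu>\<close> one has \<open>|T f - T g| \<le> \<gamma> P\<^sub>\<mu> |f - g|\<close>, and \<open>|T\<^sub>\<pi> f - T\<^sub>\<pi> g| \<le> \<gamma> P\<^sub>\<pi> |f - g|\<close>.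
Iterating, and using \<open>V\<^sup>\<pi> = T\<^sub>\<pi>\<^sup>h V\<^sup>\<pi>\<close>, gives
\<open>|T\<^sup>d V\<^sup>\<pi> - T\<^sup>d J| \<le> \<gamma>\<^sup>d\<^sup>+\<^sup>h P\<^sub>\<mu>\<^sub>1 \<dots> P\<^sub>\<mu>\<^sub>d P\<^sub>\<pi>\<^sup>h |V\<^sup>\<pi> - V|\<close> and \<open>|T\<^sub>\<pi>\<^sub>' V\<^sup>\<pi> - T\<^sub>\<pi>\<^sub>' V| \<le> \<gamma> P\<^sub>\<pi>\<^sub>' |V\<^sup>\<pi> - V|\<close>.
The triangle inequality through \<open>T\<^sup>d J - T\<^sub>\<pi>\<^sub>' V\<close>, integrated against \<open>\<rho>\<^sub>1\<close>, turns the two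
error terms into integrals of \<open>|V\<^sup>\<pi> - V|\<close> against \<open>\<rho>\<^sub>1 P\<^sub>\<mu>\<^sub>1 \<cdots> P\<^sub>\<mu>\<^sub>m\<close>, and these are at most
\<open>A'\<^sub>m\<close> times the integral against \<open>\<rho>\<^sub>0\<close> because the Radon-Nikodym density is essentially bounded
by \<open>A'\<^sub>m\<close>.\<close>

lemma finite_measurable_argmax:
  fixes g :: "'a \<Rightarrow> 's \<Rightarrow> real"
  assumes "finite F" "F \<noteq> {}" "\<forall>a\<in>F. g a \<in> borel_measurable M"
  shows "\<exists>\<mu>. \<mu> \<in> M \<rightarrow>\<^sub>M count_space F \<and> (\<forall>s\<in>space M. \<forall>a\<in>F. g a s \<le> g (\<mu> s) s)"
  using assms
proof (induction F rule: finite_ne_induct)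
  case (singleton x)
  have "(\<lambda>_. x) \<in> M \<rightarrow>\<^sub>M count_space {x}" by simp
  then show ?case by blast
next
  case (insert x F)
  then obtain \<mu> where mu: "\<mu> \<in> M \<rightarrow>\<^sub>M count_space F"
    and le: "\<forall>s\<in>space M. \<forall>a\<in>F. g a s \<le> g (\<mu> s) s"
    by blast
  define \<mu>' where "\<mu>' s = (if g (\<mu> s) s \<le> g x s then x else \<mu> s)" for s
  have g_mu: "(\<lambda>s. g (\<mu> s) s) \<in> borel_measurable M"
    by (rule measurable_compose_countable'[OF _ mu]) (use insert in \<open>auto intro: countable_finite\<close>)
  have mu_ext: "\<mu> \<in> M \<rightarrow>\<^sub>M count_space (insert x F)"
    by (rule measurable_compose_countable'[where f="\<lambda>a s. a", OF _ mu])
       (use insert in \<open>auto intro: countable_finite\<close>)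
  have "\<mu>' \<in> M \<rightarrow>\<^sub>M count_space (insert x F)"
    unfolding \<mu>'_def
    by (rule measurable_If[OF measurable_const mu_ext])
       (use g_mu insert in \<open>auto intro: borel_measurable_le\<close>)
  moreover have "g a s \<le> g (\<mu>' s) s" if "s \<in> space M" "a \<in> insert x F" for s a
    using le that unfolding \<mu>'_def by (cases "a = x") (auto, smt (verit))
  ultimately show ?case by blast
qed

locale mdp =
  fixes M :: "'s measure" and A :: "'a set" and p :: "'s \<Rightarrow> 'a \<Rightarrow> 's measure"
    and r :: "'s \<Rightarrow> 'a \<Rightarrow> real" and \<gamma> Rmax :: real
  assumes A_fin: "finite A" and A_ne: "A \<noteq> {}"
    and kernel: "\<forall>a\<in>A. (\<lambda>s. p s a) \<in> M \<rightarrow>\<^sub>M prob_algebra M"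
    and r_meas: "\<forall>a\<in>A. (\<lambda>s. r s a) \<in> borel_measurable M"
    and r_bnd: "\<forall>s\<in>space M. \<forall>a\<in>A. 0 \<le> r s a \<and> r s a \<le> Rmax"
    and gamma: "0 \<le> \<gamma>" "\<gamma> < 1"
begin

definition bounded_measurable :: "('s \<Rightarrow> real) \<Rightarrow> bool" where
  "bounded_measurable f \<longleftrightarrow> f \<in> borel_measurable M \<and> (\<exists>B. \<forall>s\<in>space M. \<bar>f s\<bar> \<le> B)"

definition P :: "('s \<Rightarrow> 'a) \<Rightarrow> ('s \<Rightarrow> real) \<Rightarrow> 's \<Rightarrow> real" where
  "P \<mu> f s = (\<integral>t. f t \<partial>(p s (\<mu> s)))"

lemma policies_const: "a \<in> A \<Longrightarrow> (\<lambda>_. a) \<in> policies M A"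
  unfolding policies_def by simp

lemma policy_in_actions: "\<mu> \<in> policies M A \<Longrightarrow> s \<in> space M \<Longrightarrow> \<mu> s \<in> A"
  using measurable_space[of \<mu> M "count_space A" s] unfolding policies_def by simp

lemma kernel_policy_measurable:
  assumes "\<mu> \<in> policies M A" shows "(\<lambda>s. p s (\<mu> s)) \<in> M \<rightarrow>\<^sub>M prob_algebra M"
  using assms unfolding policies_def
  by (intro measurable_compose_countable'[where f="\<lambda>a s. p s a" and g=\<mu> and I=A])
     (use kernel A_fin in \<open>simp_all add: countable_finite\<close>)

lemma kernel_policy_prob_space:
  assumes "\<mu> \<in> policies M A" "s \<in> space M"
  shows "prob_space (p s (\<mu> s))" "sets (p s (\<mu> s)) = sets M" "space (p s (\<mu> s)) = space M"
proof -
  have "p s (\<mu> s) \<in> space (prob_algebra M)"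
    using measurable_space[OF kernel_policy_measurable[OF assms(1)] assms(2)] .
  then show "prob_space (p s (\<mu> s))" "sets (p s (\<mu> s)) = sets M" by (simp_all add: space_prob_algebra)
  then show "space (p s (\<mu> s)) = space M" by (intro sets_eq_imp_space_eq)
qed

lemma bounded_measurableE:
  assumes "bounded_measurable f"
  obtains B where "f \<in> borel_measurable M" "\<forall>s\<in>space M. \<bar>f s\<bar> \<le> B"
  using assms unfolding bounded_measurable_def by blast

lemma bounded_measurable_add:
  assumes "bounded_measurable f" "bounded_measurable g"
  shows "bounded_measurable (\<lambda>s. f s + g s)"
proof -
  obtain B where f: "f \<in> borel_measurable M" "\<forall>s\<in>space M. \<bar>f s\<bar> \<le> B"
    using bounded_measurableE[OF assms(1)] .
  obtain C where g: "g \<in> borel_measurable M" "\<forall>s\<in>space M. \<bar>g s\<bar> \<le> C"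
    using bounded_measurableE[OF assms(2)] .
  have "\<forall>s\<in>space M. \<bar>f s + g s\<bar> \<le> B + C"
    using f(2) g(2) abs_triangle_ineq by (fastforce intro: order_trans add_mono)
  then show ?thesis unfolding bounded_measurable_def using f(1) g(1) by fastforce
qed

lemma bounded_measurable_cmult:
  assumes "bounded_measurable f" shows "bounded_measurable (\<lambda>s. c * f s)"
proof -
  obtain B where f: "f \<in> borel_measurable M" "\<forall>s\<in>space M. \<bar>f s\<bar> \<le> B"
    using bounded_measurableE[OF assms] .
  have "\<forall>s\<in>space M. \<bar>c * f s\<bar> \<le> \<bar>c\<bar> * B"
    using f(2) by (simp add: abs_mult mult_left_mono)
  then show ?thesis unfolding bounded_measurable_def using f(1) by fastforce
qed

lemma bounded_measurable_diff:
  "bounded_measurable f \<Longrightarrow> bounded_measurable g \<Longrightarrow> bounded_measurable (\<lambda>s. f s - g s)"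
  using bounded_measurable_add[OF _ bounded_measurable_cmult, of f g "-1"] by simp

lemma bounded_measurable_abs: "bounded_measurable f \<Longrightarrow> bounded_measurable (\<lambda>s. \<bar>f s\<bar>)"
  unfolding bounded_measurable_def by auto

lemma bounded_measurable_abs_diff:
  "bounded_measurable f \<Longrightarrow> bounded_measurable g \<Longrightarrow> bounded_measurable (\<lambda>s. \<bar>f s - g s\<bar>)"
  by (intro bounded_measurable_abs bounded_measurable_diff)

lemma integrable_bounded_measurable:
  assumes "prob_space N" "sets N = sets M" "bounded_measurable f" shows "integrable N f"
proof -
  interpret prob_space N by fact
  obtain B where f: "f \<in> borel_measurable M" "\<forall>s\<in>space M. \<bar>f s\<bar> \<le> B"
    using bounded_measurableE[OF assms(3)] .
  have "space N = space M" using assms(2) by (rule sets_eq_imp_space_eq)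
  moreover have "f \<in> borel_measurable N" by (subst measurable_cong_sets[OF assms(2) refl]) (rule f(1))
  ultimately show ?thesis using f(2) by (intro integrable_const_bound[where B=B]) auto
qed

lemma abs_integral_le_bound:
  assumes "prob_space N" "sets N = sets M" "bounded_measurable f" "\<forall>s\<in>space M. \<bar>f s\<bar> \<le> B"
  shows "\<bar>\<integral>t. f t \<partial>N\<bar> \<le> B"
proof -
  interpret prob_space N by fact
  have sp: "space N = space M" using assms(2) by (rule sets_eq_imp_space_eq)
  have "\<bar>\<integral>t. f t \<partial>N\<bar> \<le> (\<integral>t. \<bar>f t\<bar> \<partial>N)" by (rule integral_abs_bound)
  also have "\<dots> \<le> (\<integral>t. B \<partial>N)"
    by (rule integral_mono) (use integrable_bounded_measurable[OF assms(1-3)] assms(4) sp in auto)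
  also have "\<dots> = B" by (simp add: prob_space)
  finally show ?thesis .
qed

lemma integral_mono_bounded_measurable:
  assumes "prob_space N" "sets N = sets M" "bounded_measurable f" "bounded_measurable g"
    and "\<forall>s\<in>space M. f s \<le> g s"
  shows "(\<integral>t. f t \<partial>N) \<le> (\<integral>t. g t \<partial>N)"
  using integrable_bounded_measurable[OF assms(1,2,3)] integrable_bounded_measurable[OF assms(1,2,4)]
    assms(5) sets_eq_imp_space_eq[OF assms(2)]
  by (intro integral_mono) auto

lemma P_measurable:
  assumes "\<mu> \<in> policies M A" "f \<in> borel_measurable M" shows "P \<mu> f \<in> borel_measurable M"
  unfolding P_def
  using measurable_compose[OF measurable_prob_algebraD[OF kernel_policy_measurable[OF assms(1)]]
      integral_measurable_subprob_algebra[OF assms(2)]] .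

lemma bounded_measurable_P:
  assumes "\<mu> \<in> policies M A" "bounded_measurable f" shows "bounded_measurable (P \<mu> f)"
proof -
  obtain B where f: "f \<in> borel_measurable M" "\<forall>s\<in>space M. \<bar>f s\<bar> \<le> B"
    using bounded_measurableE[OF assms(2)] .
  have "\<forall>s\<in>space M. \<bar>P \<mu> f s\<bar> \<le> B"
    unfolding P_def
    using abs_integral_le_bound[OF kernel_policy_prob_space(1,2)[OF assms(1)] assms(2) f(2)] by blast
  then show ?thesis unfolding bounded_measurable_def using P_measurable[OF assms(1) f(1)] by blast
qed

lemma P_mono:
  assumes "\<mu> \<in> policies M A" "s \<in> space M" "bounded_measurable f" "bounded_measurable g"
    and "\<forall>s\<in>space M. f s \<le> g s"
  shows "P \<mu> f s \<le> P \<mu> g s"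
  unfolding P_def
  by (rule integral_mono_bounded_measurable[OF kernel_policy_prob_space(1,2)[OF assms(1,2)] assms(3-5)])

lemma P_cmult: "P \<mu> (\<lambda>t. c * f t) s = c * P \<mu> f s"
  unfolding P_def by simp

lemma P_diff:
  assumes "\<mu> \<in> policies M A" "s \<in> space M" "bounded_measurable f" "bounded_measurable g"
  shows "P \<mu> (\<lambda>t. f t - g t) s = P \<mu> f s - P \<mu> g s"
  using kernel_policy_prob_space(1,2)[OF assms(1,2)] assms(3,4) unfolding P_def
  by (intro Bochner_Integration.integral_diff integrable_bounded_measurable)

lemma abs_P_le: "\<bar>P \<mu> f s\<bar> \<le> P \<mu> (\<lambda>t. \<bar>f t\<bar>) s"
  unfolding P_def by (rule integral_abs_bound)

lemma abs_P_diff_le: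
  assumes "\<mu> \<in> policies M A" "s \<in> space M" "bounded_measurable f" "bounded_measurable g"
  shows "\<bar>P \<mu> f s - P \<mu> g s\<bar> \<le> P \<mu> (\<lambda>t. \<bar>f t - g t\<bar>) s"
  using abs_P_le[of \<mu> "\<lambda>t. f t - g t" s] by (simp add: P_diff[OF assms])

lemma Tpol_eq: "Tpol p r \<gamma> \<mu> f = (\<lambda>s. r s (\<mu> s) + \<gamma> * P \<mu> f s)"
  unfolding Tpol_def P_def by simp

lemma bounded_measurable_reward:
  assumes "\<mu> \<in> policies M A"
  shows "bounded_measurable (\<lambda>s. r s (\<mu> s))" "\<forall>s\<in>space M. \<bar>r s (\<mu> s)\<bar> \<le> Rmax"
proof -
  have "(\<lambda>s. r s (\<mu> s)) \<in> borel_measurable M"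
    using assms unfolding policies_def
    by (intro measurable_compose_countable'[where f="\<lambda>a s. r s a" and g=\<mu> and I=A])
       (use r_meas A_fin in \<open>simp_all add: countable_finite\<close>)
  moreover show "\<forall>s\<in>space M. \<bar>r s (\<mu> s)\<bar> \<le> Rmax"
    using r_bnd policy_in_actions[OF assms] by fastforce
  ultimately show "bounded_measurable (\<lambda>s. r s (\<mu> s))" unfolding bounded_measurable_def by blast
qed

lemma bounded_measurable_Tpol:
  "\<mu> \<in> policies M A \<Longrightarrow> bounded_measurable f \<Longrightarrow> bounded_measurable (Tpol p r \<gamma> \<mu> f)"
  unfolding Tpol_eq
  by (intro bounded_measurable_add bounded_measurable_reward bounded_measurable_cmult bounded_measurable_P)

lemma bounded_measurable_Tpol_iter:
  "\<mu> \<in> policies M A \<Longrightarrow> bounded_measurable f \<Longrightarrow> bounded_measurable ((Tpol p r \<gamma> \<mu> ^^ n) f)"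
  by (induction n) (auto intro: bounded_measurable_Tpol)

lemma abs_Tpol_diff_le:
  assumes "\<mu> \<in> policies M A" "s \<in> space M" "bounded_measurable f" "bounded_measurable g"
  shows "\<bar>Tpol p r \<gamma> \<mu> f s - Tpol p r \<gamma> \<mu> g s\<bar> \<le> \<gamma> * P \<mu> (\<lambda>t. \<bar>f t - g t\<bar>) s"
proof -
  have "\<bar>Tpol p r \<gamma> \<mu> f s - Tpol p r \<gamma> \<mu> g s\<bar> = \<gamma> * \<bar>P \<mu> f s - P \<mu> g s\<bar>"
    using gamma(1) by (simp add: Tpol_eq abs_mult flip: right_diff_distrib)
  also have "\<dots> \<le> \<gamma> * P \<mu> (\<lambda>t. \<bar>f t - g t\<bar>) s"
    by (rule mult_left_mono[OF abs_P_diff_le[OF assms] gamma(1)])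
  finally show ?thesis .
qed

definition Q :: "('s \<Rightarrow> real) \<Rightarrow> 'a \<Rightarrow> 's \<Rightarrow> real" where
  "Q f a s = r s a + \<gamma> * P (\<lambda>_. a) f s"

lemma Topt_eq: "Topt A p r \<gamma> f s = Max ((\<lambda>a. Q f a s) ` A)"
  unfolding Topt_def Q_def P_def by simp

lemma bounded_measurable_Q: "a \<in> A \<Longrightarrow> bounded_measurable f \<Longrightarrow> bounded_measurable (Q f a)"
  using bounded_measurable_Tpol[OF policies_const, of a f] by (simp add: Q_def[abs_def] Tpol_eq)

lemma bounded_measurable_Topt:
  assumes "bounded_measurable f" shows "bounded_measurable (Topt A p r \<gamma> f)"
proof -
  have Q_meas: "\<forall>a\<in>A. Q f a \<in> borel_measurable M"
    using bounded_measurable_Q[OF _ assms] unfolding bounded_measurable_def by blast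
  obtain \<mu> where mu: "\<mu> \<in> M \<rightarrow>\<^sub>M count_space A"
    and greedy: "\<forall>s\<in>space M. \<forall>a\<in>A. Q f a s \<le> Q f (\<mu> s) s"
    using finite_measurable_argmax[OF A_fin A_ne Q_meas] by blast
  have pol: "\<mu> \<in> policies M A" using mu unfolding policies_def .
  have Topt_greedy: "Topt A p r \<gamma> f s = Tpol p r \<gamma> \<mu> f s" if "s \<in> space M" for s
    unfolding Topt_eq
    by (rule Max_eqI) (use A_fin greedy that policy_in_actions[OF pol that] in \<open>auto simp: Q_def Tpol_eq P_def\<close>)
  have "bounded_measurable (Tpol p r \<gamma> \<mu> f)" by (rule bounded_measurable_Tpol[OF pol assms])
  then show ?thesis
    unfolding bounded_measurable_def by (auto simp: measurable_cong[OF Topt_greedy] Topt_greedy)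
qed

lemma bounded_measurable_Topt_iter: "bounded_measurable f \<Longrightarrow> bounded_measurable ((Topt A p r \<gamma> ^^ n) f)"
  by (induction n) (auto intro: bounded_measurable_Topt)

lemma Topt_diff_le_action:
  assumes "bounded_measurable f" "bounded_measurable g" "s \<in> space M"
  shows "\<exists>a\<in>A. Topt A p r \<gamma> f s - Topt A p r \<gamma> g s \<le> \<gamma> * P (\<lambda>_. a) (\<lambda>t. \<bar>f t - g t\<bar>) s"
proof -
  have "Max ((\<lambda>a. Q f a s) ` A) \<in> (\<lambda>a. Q f a s) ` A" by (rule Max_in) (use A_fin A_ne in auto)
  then obtain a where a: "a \<in> A" and Topt_f: "Topt A p r \<gamma> f s = Q f a s" unfolding Topt_eq by auto
  have Topt_g: "Q g a s \<le> Topt A p r \<gamma> g s" unfolding Topt_eq by (rule Max_ge) (use A_fin a in auto)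
  have "Q f a s - Q g a s \<le> \<gamma> * P (\<lambda>_. a) (\<lambda>t. \<bar>f t - g t\<bar>) s"
    using abs_Tpol_diff_le[OF policies_const[OF a] assms(3,1,2)] by (simp add: Q_def[abs_def] Tpol_eq)
  then have "Topt A p r \<gamma> f s - Topt A p r \<gamma> g s \<le> \<gamma> * P (\<lambda>_. a) (\<lambda>t. \<bar>f t - g t\<bar>) s"
    using Topt_f Topt_g by linarith
  then show ?thesis using a by blast
qed

text \<open>A single selector bounds both signs of the difference because it maximises the
majorant \<open>P (\<lambda>_. a) |f - g|\<close> over all actions at once.\<close>

lemma abs_Topt_diff_le:
  assumes "bounded_measurable f" "bounded_measurable g"
  shows "\<exists>\<mu>\<in>policies M A. \<forall>s\<in>space M.
     \<bar>Topt A p r \<gamma> f s - Topt A p r \<gamma> g s\<bar> \<le> \<gamma> * P \<mu> (\<lambda>t. \<bar>f t - g t\<bar>) s"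
proof -
  define D where "D = (\<lambda>t. \<bar>f t - g t\<bar>)"
  have D_sym: "(\<lambda>t. \<bar>g t - f t\<bar>) = D" unfolding D_def by (simp add: abs_minus_commute)
  have "\<forall>a\<in>A. P (\<lambda>_. a) D \<in> borel_measurable M"
    using bounded_measurable_P[OF policies_const bounded_measurable_abs_diff[OF assms]]
    unfolding bounded_measurable_def D_def by blast
  from finite_measurable_argmax[OF A_fin A_ne this]
  obtain \<mu> where mu: "\<mu> \<in> M \<rightarrow>\<^sub>M count_space A"
    and greedy: "\<forall>s\<in>space M. \<forall>a\<in>A. P (\<lambda>_. a) D s \<le> P (\<lambda>_. \<mu> s) D s"
    by blast
  have greedy_le: "\<gamma> * P (\<lambda>_. a) D s \<le> \<gamma> * P \<mu> D s" if "s \<in> space M" "a \<in> A" for s a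
    using greedy that gamma(1) by (simp add: P_def mult_left_mono)
  have "\<bar>Topt A p r \<gamma> f s - Topt A p r \<gamma> g s\<bar> \<le> \<gamma> * P \<mu> D s" if s: "s \<in> space M" for s
  proof -
    obtain a1 where "a1 \<in> A" "Topt A p r \<gamma> f s - Topt A p r \<gamma> g s \<le> \<gamma> * P (\<lambda>_. a1) D s"
      using Topt_diff_le_action[OF assms s] unfolding D_def by blast
    with greedy_le[OF s] have "Topt A p r \<gamma> f s - Topt A p r \<gamma> g s \<le> \<gamma> * P \<mu> D s" by fastforce
    moreover obtain a2 where "a2 \<in> A" "Topt A p r \<gamma> g s - Topt A p r \<gamma> f s \<le> \<gamma> * P (\<lambda>_. a2) D s"
      using Topt_diff_le_action[OF assms(2,1) s] unfolding D_sym by blast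
    with greedy_le[OF s] have "Topt A p r \<gamma> g s - Topt A p r \<gamma> f s \<le> \<gamma> * P \<mu> D s" by fastforce
    ultimately show ?thesis by linarith
  qed
  then show ?thesis using mu unfolding policies_def D_def by blast
qed

primrec P_list :: "('s \<Rightarrow> 'a) list \<Rightarrow> ('s \<Rightarrow> real) \<Rightarrow> 's \<Rightarrow> real" where
  "P_list [] f = f"
| "P_list (\<mu> # \<mu>s) f = P \<mu> (P_list \<mu>s f)"

lemma bounded_measurable_P_list:
  "set \<mu>s \<subseteq> policies M A \<Longrightarrow> bounded_measurable f \<Longrightarrow> bounded_measurable (P_list \<mu>s f)"
  by (induction \<mu>s) (auto intro: bounded_measurable_P)

lemma P_list_mono:
  "set \<mu>s \<subseteq> policies M A \<Longrightarrow> bounded_measurable f \<Longrightarrow> bounded_measurable g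
    \<Longrightarrow> \<forall>s\<in>space M. f s \<le> g s \<Longrightarrow> s \<in> space M \<Longrightarrow> P_list \<mu>s f s \<le> P_list \<mu>s g s"
proof (induction \<mu>s arbitrary: s)
  case (Cons \<mu> \<mu>s)
  then have "\<mu> \<in> policies M A" "set \<mu>s \<subseteq> policies M A" by auto
  with Cons show ?case
    unfolding P_list.simps by (intro P_mono bounded_measurable_P_list) auto
qed simp

lemma P_list_cmult: "P_list \<mu>s (\<lambda>t. c * f t) = (\<lambda>s. c * P_list \<mu>s f s)"
  by (induction \<mu>s) (simp_all add: P_cmult)

lemma P_list_append: "P_list (\<mu>s @ \<nu>s) f = P_list \<mu>s (P_list \<nu>s f)"
  by (induction \<mu>s) simp_all

lemma abs_Topt_iter_diff_le:
  assumes "bounded_measurable f" "bounded_measurable g"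
  shows "\<exists>\<mu>s. length \<mu>s = d \<and> set \<mu>s \<subseteq> policies M A \<and> (\<forall>s\<in>space M.
     \<bar>(Topt A p r \<gamma> ^^ d) f s - (Topt A p r \<gamma> ^^ d) g s\<bar> \<le> \<gamma> ^ d * P_list \<mu>s (\<lambda>t. \<bar>f t - g t\<bar>) s)"
proof (induction d)
  case 0 show ?case by (intro exI[of _ "[]"]) simp
next
  case (Suc d)
  define F where "F = (Topt A p r \<gamma> ^^ d) f"
  define H where "H = (Topt A p r \<gamma> ^^ d) g"
  define D where "D = (\<lambda>t. \<bar>f t - g t\<bar>)"
  have bm: "bounded_measurable F" "bounded_measurable H" "bounded_measurable D"
    unfolding F_def H_def D_def by (intro bounded_measurable_Topt_iter bounded_measurable_abs_diff assms)+
  from Suc obtain \<mu>s where len: "length \<mu>s = d" and \<mu>s: "set \<mu>s \<subseteq> policies M A"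
    and IH: "\<forall>s\<in>space M. \<bar>F s - H s\<bar> \<le> \<gamma> ^ d * P_list \<mu>s D s"
    unfolding F_def H_def D_def by blast
  obtain \<mu> where \<mu>: "\<mu> \<in> policies M A"
    and step: "\<forall>s\<in>space M. \<bar>Topt A p r \<gamma> F s - Topt A p r \<gamma> H s\<bar> \<le> \<gamma> * P \<mu> (\<lambda>t. \<bar>F t - H t\<bar>) s"
    using abs_Topt_diff_le[OF bm(1,2)] by blast
  have "\<bar>Topt A p r \<gamma> F s - Topt A p r \<gamma> H s\<bar> \<le> \<gamma> ^ Suc d * P_list (\<mu> # \<mu>s) D s"
    if s: "s \<in> space M" for s
  proof -
    have "\<bar>Topt A p r \<gamma> F s - Topt A p r \<gamma> H s\<bar> \<le> \<gamma> * P \<mu> (\<lambda>t. \<bar>F t - H t\<bar>) s"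
      using step s by blast
    also have "\<dots> \<le> \<gamma> * P \<mu> (\<lambda>t. \<gamma> ^ d * P_list \<mu>s D t) s"
      using IH bm bounded_measurable_P_list[OF \<mu>s]
      by (intro mult_left_mono[OF _ gamma(1)] P_mono[OF \<mu> s] bounded_measurable_abs_diff
          bounded_measurable_cmult) auto
    also have "\<dots> = \<gamma> ^ Suc d * P_list (\<mu> # \<mu>s) D s" by (simp add: P_cmult)
    finally show ?thesis .
  qed
  then show ?case using len \<mu>s \<mu> unfolding F_def H_def D_def by (intro exI[of _ "\<mu> # \<mu>s"]) auto
qed

lemma state_dist_measurable:
  assumes "\<pi> \<in> policies M A" shows "(\<lambda>s. state_dist M p \<pi> s t) \<in> M \<rightarrow>\<^sub>M prob_algebra M"
proof (induction t)
  case 0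
  have "(\<lambda>s. state_dist M p \<pi> s 0) = return M" by (simp add: state_dist_def fun_eq_iff)
  then show ?case using measurable_return_prob_space[of M] by simp
next
  case (Suc t)
  have "(\<lambda>s. state_dist M p \<pi> s (Suc t)) = (\<lambda>s. state_dist M p \<pi> s t \<bind> (\<lambda>y. p y (\<pi> y)))"
    unfolding state_dist_def push_def by simp
  then show ?case
    using measurable_bind_prob_space[OF Suc kernel_policy_measurable[OF assms]] by simp
qed

lemma state_dist_prob_space:
  assumes "\<pi> \<in> policies M A" "s \<in> space M"
  shows "prob_space (state_dist M p \<pi> s t)" "sets (state_dist M p \<pi> s t) = sets M"
  using measurable_space[OF state_dist_measurable[OF assms(1)] assms(2)]
  by (simp_all add: space_prob_algebra)

lemma state_dist_measurable_kernel:
  assumes "\<pi> \<in> policies M A" "\<mu> \<in> policies M A" "s \<in> space M"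
  shows "(\<lambda>y. state_dist M p \<pi> y t) \<in> p s (\<mu> s) \<rightarrow>\<^sub>M subprob_algebra M"
  using measurable_prob_algebraD[OF state_dist_measurable[OF assms(1)]]
  by (subst measurable_cong_sets[OF kernel_policy_prob_space(2)[OF assms(2,3)] refl])

lemma state_dist_Suc:
  assumes "\<pi> \<in> policies M A" "s \<in> space M"
  shows "state_dist M p \<pi> s (Suc t) = p s (\<pi> s) \<bind> (\<lambda>y. state_dist M p \<pi> y t)"
proof (induction t)
  case 0
  have "(\<lambda>y. state_dist M p \<pi> y 0) = return M" by (simp add: state_dist_def fun_eq_iff)
  moreover have "state_dist M p \<pi> s (Suc 0) = return M s \<bind> (\<lambda>y. p y (\<pi> y))"
    unfolding state_dist_def push_def by simp
  moreover have "\<dots> = p s (\<pi> s)"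
    by (rule bind_return[OF measurable_prob_algebraD[OF kernel_policy_measurable[OF assms(1)]] assms(2)])
  moreover have "\<dots> = p s (\<pi> s) \<bind> return M"
    by (rule bind_return''[symmetric]) (rule kernel_policy_prob_space(2)[OF assms])
  ultimately show ?case by simp
next
  case (Suc t)
  have "state_dist M p \<pi> s (Suc (Suc t)) = state_dist M p \<pi> s (Suc t) \<bind> (\<lambda>y. p y (\<pi> y))"
    unfolding state_dist_def push_def by simp
  also have "\<dots> = (p s (\<pi> s) \<bind> (\<lambda>y. state_dist M p \<pi> y t)) \<bind> (\<lambda>y. p y (\<pi> y))" using Suc by simp
  also have "\<dots> = p s (\<pi> s) \<bind> (\<lambda>x. state_dist M p \<pi> x t \<bind> (\<lambda>y. p y (\<pi> y)))"
    by (rule bind_assoc[OF state_dist_measurable_kernel[OF assms(1,1,2)]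
          measurable_prob_algebraD[OF kernel_policy_measurable[OF assms(1)]]])
  also have "\<dots> = p s (\<pi> s) \<bind> (\<lambda>y. state_dist M p \<pi> y (Suc t))"
    unfolding state_dist_def push_def by simp
  finally show ?case .
qed

definition expected_reward :: "('s \<Rightarrow> 'a) \<Rightarrow> nat \<Rightarrow> 's \<Rightarrow> real" where
  "expected_reward \<pi> t s = (\<integral>x. r x (\<pi> x) \<partial>(state_dist M p \<pi> s t))"

lemma Vpol_expected_reward: "Vpol M p r \<gamma> \<pi> s = (\<Sum>t. \<gamma> ^ t * expected_reward \<pi> t s)"
  unfolding Vpol_def expected_reward_def by simp

lemma bounded_measurable_expected_reward:
  assumes "\<pi> \<in> policies M A"
  shows "bounded_measurable (expected_reward \<pi> t)" "\<forall>s\<in>space M. \<bar>expected_reward \<pi> t s\<bar> \<le> Rmax"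
proof -
  have "expected_reward \<pi> t \<in> borel_measurable M"
    unfolding expected_reward_def[abs_def]
    using bounded_measurable_reward(1)[OF assms] unfolding bounded_measurable_def
    using measurable_compose[OF measurable_prob_algebraD[OF state_dist_measurable[OF assms]]
        integral_measurable_subprob_algebra] by blast
  moreover show "\<forall>s\<in>space M. \<bar>expected_reward \<pi> t s\<bar> \<le> Rmax"
    unfolding expected_reward_def
    using abs_integral_le_bound[OF state_dist_prob_space[OF assms] bounded_measurable_reward[OF assms]]
    by blast
  ultimately show "bounded_measurable (expected_reward \<pi> t)" unfolding bounded_measurable_def by blast
qed

lemma expected_reward_0:
  assumes "\<pi> \<in> policies M A" "s \<in> space M" shows "expected_reward \<pi> 0 s = r s (\<pi> s)"
proof -
  have "(\<lambda>s. r s (\<pi> s)) \<in> borel_measurable M"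
    using bounded_measurable_reward(1)[OF assms(1)] unfolding bounded_measurable_def by blast
  then show ?thesis unfolding expected_reward_def state_dist_def using integral_return[OF assms(2)] by simp
qed

lemma expected_reward_Suc:
  assumes "\<pi> \<in> policies M A" "s \<in> space M"
  shows "expected_reward \<pi> (Suc t) s = P \<pi> (expected_reward \<pi> t) s"
proof -
  have r_meas: "(\<lambda>s. r s (\<pi> s)) \<in> borel_measurable M"
    using bounded_measurable_reward(1)[OF assms(1)] unfolding bounded_measurable_def by blast
  have fin: "finite_measure (p s (\<pi> s))"
    using kernel_policy_prob_space(1)[OF assms] unfolding prob_space_def by blast
  have AE_prob: "AE x in p s (\<pi> s).
      emeasure (state_dist M p \<pi> x t) (space (state_dist M p \<pi> x t)) \<le> ennreal 1"
    using prob_space.emeasure_space_1[OF state_dist_prob_space(1)[OF assms(1)]]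
      kernel_policy_prob_space(3)[OF assms] by (intro AE_I2) simp
  show ?thesis
    unfolding expected_reward_def P_def state_dist_Suc[OF assms]
    by (rule integral_bind[OF r_meas _ state_dist_measurable_kernel[OF assms(1,1,2)] fin AE_prob])
       (use bounded_measurable_reward(2)[OF assms(1)] in blast)
qed

lemma summable_geometric_Rmax: "summable (\<lambda>t. \<gamma> ^ t * Rmax)"
  using gamma by (intro summable_mult2 summable_geometric) simp

lemma norm_discounted_expected_reward_le:
  "\<pi> \<in> policies M A \<Longrightarrow> s \<in> space M \<Longrightarrow> norm (\<gamma> ^ t * expected_reward \<pi> t s) \<le> \<gamma> ^ t * Rmax"
  using bounded_measurable_expected_reward(2) gamma(1) by (simp add: abs_mult mult_left_mono)

lemma summable_norm_discounted_expected_reward: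
  "\<pi> \<in> policies M A \<Longrightarrow> s \<in> space M \<Longrightarrow> summable (\<lambda>t. norm (\<gamma> ^ t * expected_reward \<pi> t s))"
  using norm_discounted_expected_reward_le
  by (intro summable_comparison_test'[OF summable_geometric_Rmax]) simp

lemma bounded_measurable_Vpol:
  assumes "\<pi> \<in> policies M A" shows "bounded_measurable (Vpol M p r \<gamma> \<pi>)"
proof -
  have "Vpol M p r \<gamma> \<pi> \<in> borel_measurable M"
  proof (rule borel_measurable_LIMSEQ_real[where u="\<lambda>i s. \<Sum>t<i. \<gamma> ^ t * expected_reward \<pi> t s"])
    fix s assume "s \<in> space M"
    then show "(\<lambda>i. \<Sum>t<i. \<gamma> ^ t * expected_reward \<pi> t s) \<longlonglongrightarrow> Vpol M p r \<gamma> \<pi> s"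
      unfolding Vpol_expected_reward
      by (intro summable_LIMSEQ summable_norm_cancel[OF summable_norm_discounted_expected_reward[OF assms]])
  next
    fix i show "(\<lambda>s. \<Sum>t<i. \<gamma> ^ t * expected_reward \<pi> t s) \<in> borel_measurable M"
      using bounded_measurable_expected_reward(1)[OF assms] unfolding bounded_measurable_def
      by (intro borel_measurable_sum borel_measurable_times borel_measurable_const) blast
  qed
  moreover have "\<bar>Vpol M p r \<gamma> \<pi> s\<bar> \<le> (\<Sum>t. \<gamma> ^ t * Rmax)" if s: "s \<in> space M" for s
  proof -
    have "\<bar>Vpol M p r \<gamma> \<pi> s\<bar> \<le> (\<Sum>t. norm (\<gamma> ^ t * expected_reward \<pi> t s))"
      unfolding Vpol_expected_reward
      using summable_norm[OF summable_norm_discounted_expected_reward[OF assms s]] by simp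
    also have "\<dots> \<le> (\<Sum>t. \<gamma> ^ t * Rmax)"
      by (rule suminf_le[OF norm_discounted_expected_reward_le[OF assms s]
            summable_norm_discounted_expected_reward[OF assms s] summable_geometric_Rmax])
    finally show ?thesis .
  qed
  ultimately show ?thesis unfolding bounded_measurable_def by blast
qed

text \<open>Split off the first summand of \<open>V\<^sup>\<pi>\<close> and exchange the remaining series with the
integral against \<open>p(\<cdot> | s, \<pi> s)\<close>.\<close>

lemma Vpol_fixpoint:
  assumes "\<pi> \<in> policies M A" "s \<in> space M"
  shows "Tpol p r \<gamma> \<pi> (Vpol M p r \<gamma> \<pi>) s = Vpol M p r \<gamma> \<pi> s"
proof -
  let ?N = "p s (\<pi> s)"
  let ?f = "\<lambda>t y. \<gamma> ^ t * expected_reward \<pi> t y"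
  have N: "prob_space ?N" "sets ?N = sets M" "space ?N = space M"
    using kernel_policy_prob_space[OF assms] by auto
  have int: "integrable ?N (?f t)" for t
    by (rule integrable_bounded_measurable[OF N(1,2) bounded_measurable_cmult
          [OF bounded_measurable_expected_reward(1)[OF assms(1)]]])
  have AE_summable: "AE y in ?N. summable (\<lambda>t. norm (?f t y))"
    using N(3) summable_norm_discounted_expected_reward[OF assms(1)] by (intro AE_I2) auto
  have summable_int: "summable (\<lambda>t. \<integral>y. norm (?f t y) \<partial>?N)"
  proof (rule summable_comparison_test'[OF summable_geometric_Rmax])
    fix t
    show "norm (\<integral>y. norm (?f t y) \<partial>?N) \<le> \<gamma> ^ t * Rmax"
      using abs_integral_le_bound[OF N(1,2) bounded_measurable_abs[OF bounded_measurable_cmult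
            [OF bounded_measurable_expected_reward(1)[OF assms(1)]]]]
        norm_discounted_expected_reward_le[OF assms(1)] by simp
  qed
  have summable_f: "summable (\<lambda>t. ?f t s)"
    by (rule summable_norm_cancel[OF summable_norm_discounted_expected_reward[OF assms]])
  have "Vpol M p r \<gamma> \<pi> s = (\<Sum>t. ?f (Suc t) s) + ?f 0 s"
    unfolding Vpol_expected_reward using suminf_split_head[OF summable_f] by simp
  also have "(\<Sum>t. ?f (Suc t) s) = \<gamma> * (\<Sum>t. \<integral>y. ?f t y \<partial>?N)"
    using suminf_mult[OF summable_integral[OF int AE_summable summable_int], of \<gamma>]
    by (simp add: expected_reward_Suc[OF assms] P_def mult.assoc)
  also have "(\<Sum>t. \<integral>y. ?f t y \<partial>?N) = P \<pi> (Vpol M p r \<gamma> \<pi>) s"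
    unfolding P_def Vpol_expected_reward by (rule integral_suminf[OF int AE_summable summable_int, symmetric])
  finally show ?thesis using expected_reward_0[OF assms] by (simp add: Tpol_eq)
qed

lemma abs_Vpol_Tpol_iter_diff_le:
  assumes \<pi>: "\<pi> \<in> policies M A" and V: "bounded_measurable V"
  shows "\<forall>s\<in>space M. \<bar>Vpol M p r \<gamma> \<pi> s - (Tpol p r \<gamma> \<pi> ^^ h) V s\<bar>
           \<le> \<gamma> ^ h * P_list (replicate h \<pi>) (\<lambda>t. \<bar>Vpol M p r \<gamma> \<pi> t - V t\<bar>) s"
proof (induction h)
  case (Suc h)
  define W where "W = Vpol M p r \<gamma> \<pi>"
  define J where "J = (Tpol p r \<gamma> \<pi> ^^ h) V"
  define D where "D = (\<lambda>t. \<bar>W t - V t\<bar>)"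
  have bm: "bounded_measurable W" "bounded_measurable J" "bounded_measurable D"
    unfolding W_def J_def D_def
    by (intro bounded_measurable_Vpol bounded_measurable_Tpol_iter bounded_measurable_abs_diff \<pi> V)+
  have IH: "\<forall>s\<in>space M. \<bar>W s - J s\<bar> \<le> \<gamma> ^ h * P_list (replicate h \<pi>) D s"
    using Suc unfolding W_def J_def D_def .
  have "\<bar>W s - Tpol p r \<gamma> \<pi> J s\<bar> \<le> \<gamma> ^ Suc h * P_list (replicate (Suc h) \<pi>) D s"
    if s: "s \<in> space M" for s
  proof -
    have "\<bar>W s - Tpol p r \<gamma> \<pi> J s\<bar> = \<bar>Tpol p r \<gamma> \<pi> W s - Tpol p r \<gamma> \<pi> J s\<bar>"
      using Vpol_fixpoint[OF \<pi> s] unfolding W_def by simp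
    also have "\<dots> \<le> \<gamma> * P \<pi> (\<lambda>t. \<bar>W t - J t\<bar>) s"
      by (rule abs_Tpol_diff_le[OF \<pi> s bm(1,2)])
    also have "\<dots> \<le> \<gamma> * P \<pi> (\<lambda>t. \<gamma> ^ h * P_list (replicate h \<pi>) D t) s"
      using IH bm \<pi>
      by (intro mult_left_mono[OF P_mono[OF \<pi> s] gamma(1)] bounded_measurable_abs_diff
          bounded_measurable_cmult bounded_measurable_P_list) auto
    also have "\<dots> = \<gamma> ^ Suc h * P_list (replicate (Suc h) \<pi>) D s" by (simp add: P_cmult)
    finally show ?thesis .
  qed
  then show ?case unfolding W_def J_def D_def by simp
qed simp

lemma abs_Topt_iter_Tpol_diff_le:
  fixes d h :: nat
  assumes \<pi>: "\<pi> \<in> policies M A" and \<pi>': "\<pi>' \<in> policies M A" and V: "bounded_measurable V"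
  defines "W \<equiv> Vpol M p r \<gamma> \<pi>" and "J \<equiv> (Tpol p r \<gamma> \<pi> ^^ h) V"
    and "D \<equiv> \<lambda>t. \<bar>Vpol M p r \<gamma> \<pi> t - V t\<bar>" and "T \<equiv> Topt A p r \<gamma> ^^ d"
  shows "\<exists>\<mu>s. length \<mu>s = d \<and> set \<mu>s \<subseteq> policies M A \<and> (\<forall>s\<in>space M.
    \<bar>T W s - Tpol p r \<gamma> \<pi>' W s\<bar> \<le> \<bar>T J s - Tpol p r \<gamma> \<pi>' V s\<bar>
      + \<gamma> ^ (d + h) * P_list (\<mu>s @ replicate h \<pi>) D s + \<gamma> * P_list [\<pi>'] D s)"
proof -
  have bm: "bounded_measurable W" "bounded_measurable J" "bounded_measurable D"
    unfolding W_def J_def D_def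
    by (intro bounded_measurable_Vpol bounded_measurable_Tpol_iter bounded_measurable_abs_diff \<pi> V)+
  obtain \<mu>s where len: "length \<mu>s = d" and \<mu>s: "set \<mu>s \<subseteq> policies M A"
    and T_WJ: "\<forall>s\<in>space M. \<bar>T W s - T J s\<bar> \<le> \<gamma> ^ d * P_list \<mu>s (\<lambda>t. \<bar>W t - J t\<bar>) s"
    using abs_Topt_iter_diff_le[OF bm(1,2)] unfolding T_def by blast
  have WJ: "\<forall>s\<in>space M. \<bar>W s - J s\<bar> \<le> \<gamma> ^ h * P_list (replicate h \<pi>) D s"
    using abs_Vpol_Tpol_iter_diff_le[OF \<pi> V] unfolding W_def J_def D_def .
  have "\<bar>T W s - Tpol p r \<gamma> \<pi>' W s\<bar> \<le> \<bar>T J s - Tpol p r \<gamma> \<pi>' V s\<bar>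
      + \<gamma> ^ (d + h) * P_list (\<mu>s @ replicate h \<pi>) D s + \<gamma> * P_list [\<pi>'] D s"
    if s: "s \<in> space M" for s
  proof -
    have "P_list \<mu>s (\<lambda>t. \<bar>W t - J t\<bar>) s \<le> P_list \<mu>s (\<lambda>t. \<gamma> ^ h * P_list (replicate h \<pi>) D t) s"
      using bm \<pi> by (intro P_list_mono[OF \<mu>s _ _ WJ s] bounded_measurable_abs_diff
          bounded_measurable_cmult bounded_measurable_P_list) auto
    then have "\<gamma> ^ d * P_list \<mu>s (\<lambda>t. \<bar>W t - J t\<bar>) s
        \<le> \<gamma> ^ d * P_list \<mu>s (\<lambda>t. \<gamma> ^ h * P_list (replicate h \<pi>) D t) s"
      using gamma(1) by (simp add: mult_left_mono)
    also have "\<dots> = \<gamma> ^ (d + h) * P_list (\<mu>s @ replicate h \<pi>) D s"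
      by (simp add: P_list_cmult P_list_append power_add)
    finally have "\<bar>T W s - T J s\<bar> \<le> \<gamma> ^ (d + h) * P_list (\<mu>s @ replicate h \<pi>) D s"
      using T_WJ s by fastforce
    moreover have "\<bar>Tpol p r \<gamma> \<pi>' V s - Tpol p r \<gamma> \<pi>' W s\<bar> \<le> \<gamma> * P_list [\<pi>'] D s"
      using abs_Tpol_diff_le[OF \<pi>' s V bm(1)] unfolding D_def W_def by (simp add: abs_minus_commute)
    ultimately show ?thesis by linarith
  qed
  then show ?thesis using len \<mu>s by blast
qed

lemma push_prob_algebra:
  assumes "\<nu> \<in> space (prob_algebra M)" "\<mu> \<in> policies M A"
  shows "push p \<nu> \<mu> \<in> space (prob_algebra M)"
  unfolding push_def space_prob_algebra
  using prob_space_bind'[OF assms(1) kernel_policy_measurable[OF assms(2)]]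
    sets_bind'[OF assms(1) kernel_policy_measurable[OF assms(2)]] by simp

lemma push_list_prob_algebra:
  "\<nu> \<in> space (prob_algebra M) \<Longrightarrow> set \<mu>s \<subseteq> policies M A
    \<Longrightarrow> push_list p \<nu> \<mu>s \<in> space (prob_algebra M)"
  by (induction \<mu>s arbitrary: \<nu>) (simp_all add: push_list_def push_prob_algebra)

lemma integral_P:
  assumes \<nu>: "\<nu> \<in> space (prob_algebra M)" and \<mu>: "\<mu> \<in> policies M A" and f: "bounded_measurable f"
  shows "(\<integral>s. P \<mu> f s \<partial>\<nu>) = (\<integral>t. f t \<partial>(push p \<nu> \<mu>))"
proof -
  obtain B where fB: "f \<in> borel_measurable M" "\<forall>s\<in>space M. \<bar>f s\<bar> \<le> B"
    using bounded_measurableE[OF f] .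
  have \<nu>_prob: "prob_space \<nu>" "sets \<nu> = sets M" using \<nu> by (auto simp: space_prob_algebra)
  have "(\<lambda>s. p s (\<mu> s)) \<in> \<nu> \<rightarrow>\<^sub>M subprob_algebra M"
    using measurable_prob_algebraD[OF kernel_policy_measurable[OF \<mu>]]
    by (subst measurable_cong_sets[OF \<nu>_prob(2) refl])
  moreover have "finite_measure \<nu>" using \<nu>_prob(1) unfolding prob_space_def by blast
  moreover have "AE x in \<nu>. emeasure (p x (\<mu> x)) (space (p x (\<mu> x))) \<le> ennreal 1"
    using prob_space.emeasure_space_1[OF kernel_policy_prob_space(1)[OF \<mu>]]
      sets_eq_imp_space_eq[OF \<nu>_prob(2)] by (intro AE_I2) simp
  ultimately show ?thesis unfolding push_def P_def
    by (intro integral_bind[OF fB(1), symmetric]) (use fB(2) in blast)+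
qed

lemma integral_P_list:
  "\<nu> \<in> space (prob_algebra M) \<Longrightarrow> set \<mu>s \<subseteq> policies M A \<Longrightarrow> bounded_measurable f
    \<Longrightarrow> (\<integral>s. P_list \<mu>s f s \<partial>\<nu>) = (\<integral>t. f t \<partial>(push_list p \<nu> \<mu>s))"
proof (induction \<mu>s arbitrary: \<nu>)
  case (Cons \<mu> \<mu>s)
  then have "(\<integral>s. P_list (\<mu> # \<mu>s) f s \<partial>\<nu>) = (\<integral>t. P_list \<mu>s f t \<partial>(push p \<nu> \<mu>))"
    by (auto intro: integral_P bounded_measurable_P_list)
  also have "\<dots> = (\<integral>t. f t \<partial>(push_list p \<nu> (\<mu> # \<mu>s)))"
    using Cons by (simp add: push_list_def push_prob_algebra)
  finally show ?case .
qed (simp add: push_list_def)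

lemma integral_le_esssup_RN_deriv:
  assumes \<rho>: "\<rho> \<in> space (prob_algebra M)" and \<nu>: "\<nu> \<in> space (prob_algebra M)"
    and ac: "absolutely_continuous \<rho> \<nu>"
    and C: "esssup \<rho> (RN_deriv \<rho> \<nu>) \<le> C" "C < \<infinity>"
    and f: "bounded_measurable f" "\<forall>s\<in>space M. 0 \<le> f s"
  shows "(\<integral>t. f t \<partial>\<nu>) \<le> enn2real C * (\<integral>t. f t \<partial>\<rho>)"
proof -
  have \<rho>_prob: "prob_space \<rho>" "sets \<rho> = sets M" using \<rho> by (auto simp: space_prob_algebra)
  have \<nu>_prob: "prob_space \<nu>" "sets \<nu> = sets M" using \<nu> by (auto simp: space_prob_algebra)
  interpret R: prob_space \<rho> by (rule \<rho>_prob(1))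
  have f_meas: "f \<in> borel_measurable \<rho>"
    using f(1) unfolding bounded_measurable_def by (simp cong: measurable_cong_sets[OF \<rho>_prob(2) refl])
  have nn_integral_eq: "(\<integral>\<^sup>+x. ennreal (f x) \<partial>N) = ennreal (\<integral>x. f x \<partial>N)"
    if "prob_space N" "sets N = sets M" for N
    using integrable_bounded_measurable[OF that f(1)] f(2) sets_eq_imp_space_eq[OF that(2)]
    by (intro nn_integral_eq_integral) auto
  have "(\<integral>\<^sup>+x. ennreal (f x) \<partial>\<nu>) = (\<integral>\<^sup>+x. RN_deriv \<rho> \<nu> x * ennreal (f x) \<partial>\<rho>)"
    by (rule R.RN_deriv_nn_integral[OF ac]) (use \<nu>_prob(2) \<rho>_prob(2) f_meas in auto)
  also have "\<dots> \<le> (\<integral>\<^sup>+x. C * ennreal (f x) \<partial>\<rho>)"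
    using esssup_AE[of "RN_deriv \<rho> \<nu>" \<rho>]
  proof (intro nn_integral_mono_AE, eventually_elim)
    case (elim x)
    then show ?case using C(1) by (intro mult_right_mono) auto
  qed
  also have "\<dots> = C * (\<integral>\<^sup>+x. ennreal (f x) \<partial>\<rho>)"
    by (rule nn_integral_cmult) (use f_meas in simp)
  finally have "ennreal (\<integral>x. f x \<partial>\<nu>) \<le> ennreal (enn2real C) * ennreal (\<integral>x. f x \<partial>\<rho>)"
    using C(2) unfolding nn_integral_eq[OF \<nu>_prob] nn_integral_eq[OF \<rho>_prob] by simp
  moreover have "0 \<le> (\<integral>x. f x \<partial>\<rho>)"
    using f(2) sets_eq_imp_space_eq[OF \<rho>_prob(2)] by (intro integral_nonneg_AE) auto
  ultimately show ?thesis by (simp add: ennreal_mult'[symmetric] ennreal_le_iff)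
qed

lemma integral_P_list_le_conc_coeff:
  assumes \<rho>0: "\<rho>0 \<in> space (prob_algebra M)" and \<rho>1: "\<rho>1 \<in> space (prob_algebra M)"
    and ac: "absolutely_continuous \<rho>0 (push_list p \<rho>1 \<mu>s)"
    and fin: "conc_coeff M A p \<rho>0 \<rho>1 (length \<mu>s) < \<infinity>"
    and \<mu>s: "set \<mu>s \<subseteq> policies M A"
    and f: "bounded_measurable f" "\<forall>s\<in>space M. 0 \<le> f s"
  shows "(\<integral>s. P_list \<mu>s f s \<partial>\<rho>1) \<le> enn2real (conc_coeff M A p \<rho>0 \<rho>1 (length \<mu>s)) * (\<integral>s. f s \<partial>\<rho>0)"
proof -
  have "esssup \<rho>0 (RN_deriv \<rho>0 (push_list p \<rho>1 \<mu>s)) \<le> conc_coeff M A p \<rho>0 \<rho>1 (length \<mu>s)"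
    unfolding conc_coeff_def using \<mu>s by (intro SUP_upper) simp
  then show ?thesis
    unfolding integral_P_list[OF \<rho>1 \<mu>s f(1)]
    by (rule integral_le_esssup_RN_deriv[OF \<rho>0 push_list_prob_algebra[OF \<rho>1 \<mu>s] ac _ fin f])
qed

lemma norm1_le_sum_integrals:
  assumes \<rho>: "\<rho> \<in> space (prob_algebra M)"
    and bm: "bounded_measurable F" "bounded_measurable H" "bounded_measurable g1" "bounded_measurable g2"
    and le: "\<forall>s\<in>space M. \<bar>F s\<bar> \<le> \<bar>H s\<bar> + a * g1 s + b * g2 s"
  shows "norm1 \<rho> F \<le> norm1 \<rho> H + a * (\<integral>s. g1 s \<partial>\<rho>) + b * (\<integral>s. g2 s \<partial>\<rho>)"
proof -
  have \<rho>_prob: "prob_space \<rho>" "sets \<rho> = sets M" using \<rho> by (auto simp: space_prob_algebra)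
  note int = integrable_bounded_measurable[OF \<rho>_prob]
  have "norm1 \<rho> F \<le> (\<integral>s. \<bar>H s\<bar> + a * g1 s + b * g2 s \<partial>\<rho>)"
    unfolding norm1_def
    using bm le by (intro integral_mono_bounded_measurable[OF \<rho>_prob] bounded_measurable_add
        bounded_measurable_abs bounded_measurable_cmult)
  also have "\<dots> = norm1 \<rho> H + a * (\<integral>s. g1 s \<partial>\<rho>) + b * (\<integral>s. g2 s \<partial>\<rho>)"
    unfolding norm1_def
    using int[OF bounded_measurable_abs[OF bm(2)]] int[OF bounded_measurable_cmult[OF bm(3)]]
      int[OF bounded_measurable_cmult[OF bm(4)]] by simp
  finally show ?thesis .
qed

end

theorem mainTheorem4:
  fixes M :: "'s measure" and A :: "'a set"
    and p :: "'s \<Rightarrow> 'a \<Rightarrow> 's measure" and r :: "'s \<Rightarrow> 'a \<Rightarrow> real"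
    and \<gamma> Rmax :: real and \<rho>0 \<rho>1 :: "'s measure"
    and \<pi> \<pi>' :: "'s \<Rightarrow> 'a" and V :: "'s \<Rightarrow> real" and d h :: nat
  assumes A_fin: "finite A" and A_ne: "A \<noteq> {}"
    and kernel: "\<forall>a\<in>A. (\<lambda>s. p s a) \<in> M \<rightarrow>\<^sub>M prob_algebra M"
    and r_meas: "\<forall>a\<in>A. (\<lambda>s. r s a) \<in> borel_measurable M"
    and r_bnd: "\<forall>s\<in>space M. \<forall>a\<in>A. 0 \<le> r s a \<and> r s a \<le> Rmax"
    and gamma: "0 \<le> \<gamma>" "\<gamma> < 1"
    and rho0: "\<rho>0 \<in> space (prob_algebra M)"
    and rho1: "\<rho>1 \<in> space (prob_algebra M)"
    and conc_ac: "\<forall>m\<ge>1. \<forall>\<mu>s. length \<mu>s = m \<and> set \<mu>s \<subseteq> policies M A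
                    \<longrightarrow> absolutely_continuous \<rho>0 (push_list p \<rho>1 \<mu>s)"
    and conc_fin: "\<forall>m\<ge>1. conc_coeff M A p \<rho>0 \<rho>1 m < \<infinity>"
    and pi: "\<pi> \<in> policies M A" and pi': "\<pi>' \<in> policies M A"
    and V_meas: "V \<in> borel_measurable M"
    and V_bnd: "\<forall>s\<in>space M. 0 \<le> V s \<and> V s \<le> Rmax / (1 - \<gamma>)"
    and d: "d \<ge> 1"
  shows "norm1 \<rho>1 (\<lambda>s. (Topt A p r \<gamma> ^^ d) (Vpol M p r \<gamma> \<pi>) s - Tpol p r \<gamma> \<pi>' (Vpol M p r \<gamma> \<pi>) s)
         \<le> (\<gamma> * enn2real (conc_coeff M A p \<rho>0 \<rho>1 1)
              + \<gamma> ^ (d + h) * enn2real (conc_coeff M A p \<rho>0 \<rho>1 (d + h)))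
             * norm1 \<rho>0 (\<lambda>s. V s - Vpol M p r \<gamma> \<pi> s)
           + norm1 \<rho>1 (\<lambda>s. (Topt A p r \<gamma> ^^ d) ((Tpol p r \<gamma> \<pi> ^^ h) V) s - Tpol p r \<gamma> \<pi>' V s)"
proof -
  interpret mdp M A p r \<gamma> Rmax
    using A_fin A_ne kernel r_meas r_bnd gamma by unfold_locales auto
  let ?W = "Vpol M p r \<gamma> \<pi>" and ?J = "(Tpol p r \<gamma> \<pi> ^^ h) V" and ?T = "Topt A p r \<gamma> ^^ d"
  let ?D = "\<lambda>t. \<bar>?W t - V t\<bar>" and ?A' = "\<lambda>m. enn2real (conc_coeff M A p \<rho>0 \<rho>1 m)"
    and ?err = "norm1 \<rho>0 (\<lambda>s. V s - ?W s)"
  have V: "bounded_measurable V"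
    unfolding bounded_measurable_def using V_meas V_bnd by (intro conjI exI[of _ "Rmax / (1 - \<gamma>)"]) auto
  have D: "bounded_measurable ?D" "\<forall>s\<in>space M. 0 \<le> ?D s"
    by (auto intro: bounded_measurable_abs_diff bounded_measurable_Vpol pi V)
  obtain \<mu>s where len: "length \<mu>s = d" and \<mu>s: "set \<mu>s \<subseteq> policies M A"
    and pointwise: "\<forall>s\<in>space M. \<bar>?T ?W s - Tpol p r \<gamma> \<pi>' ?W s\<bar> \<le> \<bar>?T ?J s - Tpol p r \<gamma> \<pi>' V s\<bar>
      + \<gamma> ^ (d + h) * P_list (\<mu>s @ replicate h \<pi>) ?D s + \<gamma> * P_list [\<pi>'] ?D s"
    using abs_Topt_iter_Tpol_diff_le[OF pi pi' V, of d h] by blast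
  have conc: "(\<integral>s. P_list ms ?D s \<partial>\<rho>1) \<le> ?A' (length ms) * ?err"
    if "length ms \<ge> 1" "set ms \<subseteq> policies M A" for ms
    using integral_P_list_le_conc_coeff[OF rho0 rho1 _ _ that(2) D] conc_ac conc_fin that
    by (simp add: norm1_def abs_minus_commute)
  have "norm1 \<rho>1 (\<lambda>s. ?T ?W s - Tpol p r \<gamma> \<pi>' ?W s) \<le> norm1 \<rho>1 (\<lambda>s. ?T ?J s - Tpol p r \<gamma> \<pi>' V s)
      + \<gamma> ^ (d + h) * (\<integral>s. P_list (\<mu>s @ replicate h \<pi>) ?D s \<partial>\<rho>1) + \<gamma> * (\<integral>s. P_list [\<pi>'] ?D s \<partial>\<rho>1)"
    using pointwise pi pi' \<mu>s V D
    by (intro norm1_le_sum_integrals[OF rho1])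
       (auto intro!: bounded_measurable_diff bounded_measurable_Topt_iter bounded_measurable_Tpol
         bounded_measurable_Tpol_iter bounded_measurable_Vpol bounded_measurable_P_list
         bounded_measurable_P)
  also have "\<dots> \<le> norm1 \<rho>1 (\<lambda>s. ?T ?J s - Tpol p r \<gamma> \<pi>' V s)
      + \<gamma> ^ (d + h) * (?A' (d + h) * ?err) + \<gamma> * (?A' 1 * ?err)"
    using conc[of "\<mu>s @ replicate h \<pi>"] conc[of "[\<pi>']"] len d pi pi' \<mu>s gamma(1)
    by (intro add_mono mult_left_mono) (auto simp: set_replicate_conv_if)
  finally show ?thesis by (simp add: algebra_simps)
qed

end
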